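(* Let $\mathbb D=\{z\in\mathbb C:|z|<1\}$ and let $\mathcal P$ be the set of holomorphic functions $p$ on $\mathbb D$ with $\operatorname{Re} p(z)>0$ for all $z\in\mathbb D$ (no normalization $p(0)=1$ is imposed). For $p\in\mathcal P$ and $0<r<1$ set \[ I_p(r):=\int_0^{2\pi}\left|\frac{z p'(z)}{p(z)}\right|^2\,d\theta,\qquad z=re^{i\theta}. \] Then there exists a function $p_*\in\mathcal P$ such that for every real $\beta<2$, $I_{p_*}(r)\neq O\bigl((1-r)^{-\beta}\bigr)$ as $r\to1^-$.
   Context: $A(r)\ne O(B(r))$ as $r\to1^-$ means there is no constant $C$ with $A(r)\le C B(r)$ for all $r$ sufficiently close to $1$. *)

theory Defs
  imports "HOL-Complex_Analysis.Complex_Analysis"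
begin

definition carath_P :: "(complex \<Rightarrow> complex) set" where
  "carath_P = {p. p holomorphic_on ball 0 1 \<and> (\<forall>z\<in>ball 0 1. Re (p z) > 0)}"

definition I_int :: "(complex \<Rightarrow> complex) \<Rightarrow> real \<Rightarrow> real" where
  "I_int p r = integral {0..2*pi}
     (\<lambda>\<theta>. let z = complex_of_real r * exp (\<i> * complex_of_real \<theta>)
           in (cmod (z * deriv p z / p z))^2)"

end

theory Submission
  imports Defs "HOL-Real_Asymp.Real_Asymp"
begin

(* The witness is p = exp g for the gap series g(z) = sum_k 2^(-k-1) z^(n_k) with
   n_k = 2^(4 k^2).  Since |g| <= 1 < pi/2 we have Re p > 0, and z p'/p = z g'(z) =
   sum_k 2^(-k-1) n_k z^(n_k).  On the circle |z| = r = 1 - 1/(2 n_K) the K-th term has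
   modulus at least 2^(-K-2) n_K, while the gaps between the exponents keep each other
   term below 2^(-K-3) n_K times its coefficient: the earlier ones because n_k is tiny
   compared with n_K, the later ones because r^(n_k) is tiny.  So I_p(r) is at least
   2 pi (2^(-K-3) n_K)^2, whereas (1 - r)^(-beta) = (2 n_K)^beta; since 4^K = n_K^o(1),
   the former wins for every beta < 2. *)

lemma of_nat_mult_power_pred_le:
  fixes r :: real
  assumes "0 \<le> r" "r < 1"
  shows "real m * r ^ (m - 1) \<le> 1 / (1 - r)"
proof -
  have "real m * r ^ (m - 1) = (\<Sum>j<m. r ^ (m - 1))" by simp
  also have "\<dots> \<le> (\<Sum>j<m. r ^ j)"
    by (intro sum_mono power_decreasing) (use assms in auto)
  also have "\<dots> = (1 - r ^ m) / (1 - r)"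
    using assms by (simp add: sum_gp_strict)
  also have "\<dots> \<le> 1 / (1 - r)"
    using assms by (intro divide_right_mono) auto
  finally show ?thesis .
qed

lemma of_nat_mult_power_le:
  fixes r :: real
  assumes "0 \<le> r" "r < 1"
  shows "real m * r ^ m \<le> 2 / (real m * (1 - r)^2)"
proof (cases "m = 0")
  case False
  define y where "y = real m * (1 - r)"
  have y: "0 < y"
    using False assms by (simp add: y_def)
  have "r ^ m \<le> exp (- (1 - r)) ^ m"
    using exp_ge_add_one_self[of "- (1 - r)"] assms by (intro power_mono) auto
  also have "\<dots> = exp (- y)"
    by (simp add: y_def exp_of_nat_mult[symmetric] algebra_simps)
  also have "\<dots> \<le> 2 / y^2"
  proof -
    have "y^2 / 2 \<le> exp y"
      using exp_lower_Taylor_quadratic[of y] y by simp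
    then show ?thesis
      using y by (simp add: exp_minus field_simps)
  qed
  finally have "real m * r ^ m \<le> real m * (2 / y^2)"
    by (rule mult_left_mono) simp
  also have "\<dots> = 2 / (real m * (1 - r)^2)"
    using False assms(2) by (simp add: y_def power_mult_distrib power2_eq_square)
  finally show ?thesis .
qed simp

lemma half_le_power_one_minus_inverse: "1 / 2 \<le> (1 - 1 / (2 * real N)) ^ N"
proof (cases "N = 0")
  case False
  have "1 + real N * (- 1 / (2 * real N)) \<le> (1 + - 1 / (2 * real N)) ^ N"
    by (rule Bernoulli_inequality) (use False in \<open>simp add: field_simps\<close>)
  then show ?thesis
    using False by simp
qed simp

lemma norm_suminf_ge_term:
  fixes f :: "nat \<Rightarrow> 'a::banach"
  assumes b: "summable b" "0 \<le> b K" and bound: "\<And>k. k \<noteq> K \<Longrightarrow> norm (f k) \<le> b k"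
  shows "norm (f K) - suminf b \<le> norm (suminf f)"
proof -
  define g where "g k = (if k = K then 0 else f k)" for k
  have g_le: "norm (g k) \<le> b k" for k
    using bound b(2) by (simp add: g_def)
  have "summable (\<lambda>k. norm (g k))"
    using g_le by (intro summable_comparison_test'[OF b(1)]) simp
  then have "g sums suminf g"
    by (rule summable_sums[OF summable_norm_cancel])
  then have "(\<lambda>k. g k + (if k = K then f k else 0)) sums (suminf g + f K)"
    by (intro sums_add sums_single)
  moreover have "(\<lambda>k. g k + (if k = K then f k else 0)) = f"
    by (simp add: g_def fun_eq_iff)
  ultimately have "suminf f = suminf g + f K"
    by (simp add: sums_iff)
  moreover have "norm (suminf g) \<le> suminf b"
    by (rule norm_suminf_le[OF g_le b(1)])
  ultimately show ?thesis
    using norm_diff_ineq[of "f K" "suminf g"] by (simp add: add.commute)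
qed

lemma not_eventually_le_powr_at_left:
  fixes f :: "real \<Rightarrow> real"
  assumes r: "filterlim r (at_left 1) sequentially"
    and lower: "\<forall>\<^sub>F K in sequentially. b K \<le> f (r K)"
    and grows: "filterlim (\<lambda>K. b K * (1 - r K) powr \<beta>) at_top sequentially"
  shows "\<not> (\<exists>C. \<forall>\<^sub>F x in at_left 1. f x \<le> C * (1 - x) powr (- \<beta>))"
proof
  assume "\<exists>C. \<forall>\<^sub>F x in at_left 1. f x \<le> C * (1 - x) powr (- \<beta>)"
  then obtain C where C: "\<forall>\<^sub>F x in at_left 1. f x \<le> C * (1 - x) powr (- \<beta>)"
    by blast
  have "\<forall>\<^sub>F K in sequentially. f (r K) \<le> C * (1 - r K) powr (- \<beta>)"
    using C r by (rule eventually_compose_filterlim)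
  moreover have "\<forall>\<^sub>F K in sequentially. r K \<in> {0<..<1}"
    using eventually_at_left_real[of 0 1, OF zero_less_one] r by (rule eventually_compose_filterlim)
  moreover have "\<forall>\<^sub>F K in sequentially. C < b K * (1 - r K) powr \<beta>"
    using filterlim_at_top_dense[THEN iffD1, OF grows] by blast
  ultimately have "\<forall>\<^sub>F K in sequentially. False"
    using lower
  proof eventually_elim
    case (elim K)
    have "b K * (1 - r K) powr \<beta> \<le> C * (1 - r K) powr (- \<beta>) * (1 - r K) powr \<beta>"
      using elim by (intro mult_right_mono) auto
    also have "\<dots> = C"
      using elim by (simp add: mult.assoc powr_add[symmetric])
    finally show False
      using elim by simp
  qed
  then show False
    by simp
qed

lemma exp_in_carath_P:
  assumes holo: "f holomorphic_on ball 0 1"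
    and Im_bound: "\<And>z. z \<in> ball 0 1 \<Longrightarrow> \<bar>Im (f z)\<bar> < pi / 2"
  shows "(\<lambda>z. exp (f z)) \<in> carath_P"
proof -
  have "Re (exp (f z)) > 0" if "z \<in> ball 0 1" for z
  proof -
    have "cos (Im (f z)) > 0"
      using Im_bound[OF that] by (intro cos_gt_zero_pi) auto
    then show ?thesis by (simp add: Re_exp)
  qed
  with holo show ?thesis
    unfolding carath_P_def by (auto intro!: holomorphic_intros)
qed

lemma I_int_ge_of_circle_bound:
  assumes holo: "p holomorphic_on ball 0 1" and nonzero: "\<And>z. z \<in> ball 0 1 \<Longrightarrow> p z \<noteq> 0"
    and r: "0 \<le> r" "r < 1"
    and bound: "\<And>w. norm w = r \<Longrightarrow> L \<le> (cmod (w * deriv p w / p w))^2"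
  shows "2 * pi * L \<le> I_int p r"
proof -
  define h where "h w = (cmod (w * deriv p w / p w))^2" for w
  define z where "z \<theta> = complex_of_real r * exp (\<i> * complex_of_real \<theta>)" for \<theta>
  have norm_z: "norm (z \<theta>) = r" for \<theta>
    using r by (simp add: z_def norm_mult)
  have "continuous_on (ball 0 1) p" "continuous_on (ball 0 1) (deriv p)"
    using holo holomorphic_deriv[OF holo] holomorphic_on_imp_continuous_on by auto
  then have "continuous_on (ball 0 1) h"
    unfolding h_def using nonzero by (intro continuous_intros) auto
  moreover have "continuous_on {0..2*pi} z"
    unfolding z_def by (intro continuous_intros)
  ultimately have "continuous_on {0..2*pi} (\<lambda>\<theta>. h (z \<theta>))"
    by (rule continuous_on_compose2) (use norm_z r in auto)
  then have "integral {0..2*pi} (\<lambda>_. L) \<le> integral {0..2*pi} (\<lambda>\<theta>. h (z \<theta>))"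
    by (intro integral_le integrable_continuous_interval) (auto simp: h_def bound norm_z)
  then show ?thesis
    by (simp add: I_int_def h_def z_def Let_def mult_ac)
qed

definition gap_series :: "(nat \<Rightarrow> real) \<Rightarrow> (nat \<Rightarrow> nat) \<Rightarrow> complex \<Rightarrow> complex" where
  "gap_series a n z = (\<Sum>k. of_real (a k) * z ^ n k)"

(* For n k = 0 the truncated exponent n k - 1 is harmless: the coefficient vanishes. *)
definition gap_series_deriv :: "(nat \<Rightarrow> real) \<Rightarrow> (nat \<Rightarrow> nat) \<Rightarrow> complex \<Rightarrow> complex" where
  "gap_series_deriv a n z = (\<Sum>k. of_real (a k * real (n k)) * z ^ (n k - 1))"

lemma norm_gap_series_term_le:
  fixes z :: complex
  assumes "0 \<le> a k" "norm z \<le> 1"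
  shows "norm (of_real (a k) * z ^ n k) \<le> a k"
proof -
  have "norm z ^ n k \<le> 1"
    using assms(2) by (simp add: power_le_one)
  then show ?thesis
    using assms(1) by (simp add: norm_mult norm_power mult_left_le)
qed

lemma norm_gap_series_deriv_term_le:
  fixes z :: complex
  assumes "0 \<le> a k" "norm z \<le> \<rho>" "\<rho> < 1"
  shows "norm (of_real (a k * real (n k)) * z ^ (n k - 1)) \<le> a k / (1 - \<rho>)"
proof -
  have "0 \<le> \<rho>" using assms(2) norm_ge_zero order_trans by blast
  have "norm (of_real (a k * real (n k)) * z ^ (n k - 1)) = a k * (real (n k) * norm z ^ (n k - 1))"
    using assms(1) by (simp add: norm_mult norm_power)
  also have "\<dots> \<le> a k * (real (n k) * \<rho> ^ (n k - 1))"
    using assms by (intro mult_left_mono power_mono) auto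
  also have "\<dots> \<le> a k * (1 / (1 - \<rho>))"
    using of_nat_mult_power_pred_le[OF \<open>0 \<le> \<rho>\<close> assms(3)] assms(1) by (intro mult_left_mono) auto
  finally show ?thesis by simp
qed

lemma summable_gap_series:
  fixes z :: complex
  assumes "summable a" "\<And>k. 0 \<le> a k" "norm z \<le> 1"
  shows "summable (\<lambda>k. norm (of_real (a k) * z ^ n k))"
  using assms norm_gap_series_term_le[of a _ z n] by (intro summable_comparison_test'[OF assms(1)]) auto

lemma summable_gap_series_deriv:
  fixes z :: complex
  assumes "summable a" "\<And>k. 0 \<le> a k" "norm z < 1"
  shows "summable (\<lambda>k. norm (of_real (a k * real (n k)) * z ^ (n k - 1)))"
proof (rule summable_comparison_test')
  show "summable (\<lambda>k. a k / (1 - norm z))"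
    using assms(1) by (rule summable_divide)
  show "norm (norm (of_real (a k * real (n k)) * z ^ (n k - 1))) \<le> a k / (1 - norm z)" for k
    using assms norm_gap_series_deriv_term_le[of a k z "norm z" n] by simp
qed

lemma norm_gap_series_le:
  assumes "summable a" "\<And>k. 0 \<le> a k" "norm z \<le> 1"
  shows "norm (gap_series a n z) \<le> suminf a"
  unfolding gap_series_def
  using assms norm_gap_series_term_le[of a _ z n] by (intro norm_suminf_le) auto

lemma gap_series_has_field_derivative:
  assumes a: "summable a" "\<And>k. 0 \<le> a k" and z: "norm z < 1"
  shows "(gap_series a n has_field_derivative gap_series_deriv a n z) (at z)"
proof -
  define \<rho> where "\<rho> = (1 + norm z) / 2"
  have \<rho>: "0 \<le> \<rho>" "norm z < \<rho>" "\<rho> < 1"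
    using z by (auto simp: \<rho>_def)
  have "uniformly_convergent_on (cball (0::complex) \<rho>)
          (\<lambda>m w. \<Sum>k<m. of_real (a k * real (n k)) * w ^ (n k - 1))"
  proof (rule Weierstrass_m_test')
    show "summable (\<lambda>k. a k / (1 - \<rho>))"
      using a(1) by (rule summable_divide)
    show "norm (of_real (a k * real (n k)) * w ^ (n k - 1)) \<le> a k / (1 - \<rho>)"
      if "w \<in> cball 0 \<rho>" for k and w :: complex
      using that a \<rho> norm_gap_series_deriv_term_le[of a k w \<rho> n] by simp
  qed
  moreover have "summable (\<lambda>k. of_real (a k) * 0 ^ n k :: complex)"
    by (rule summable_norm_cancel, rule summable_gap_series[OF a]) simp
  moreover have "((\<lambda>w. of_real (a k) * w ^ n k) has_field_derivative
                   of_real (a k * real (n k)) * w ^ (n k - 1)) (at w within cball 0 \<rho>)"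
    for k and w :: complex
    by (auto intro!: derivative_eq_intros simp: mult_ac)
  ultimately have "((\<lambda>w. \<Sum>k. of_real (a k) * w ^ n k) has_field_derivative
                    (\<Sum>k. of_real (a k * real (n k)) * z ^ (n k - 1))) (at z)"
    using \<rho> by (intro has_field_derivative_series'(2)[OF convex_cball]) auto
  then show ?thesis
    by (simp add: gap_series_def[abs_def] gap_series_deriv_def)
qed

lemma holomorphic_gap_series:
  assumes "summable a" "\<And>k. 0 \<le> a k"
  shows "gap_series a n holomorphic_on ball 0 1"
proof -
  have "(gap_series a n has_field_derivative gap_series_deriv a n z) (at z)" if "z \<in> ball 0 1" for z
    using gap_series_has_field_derivative[OF assms] that by simp
  then show ?thesis
    unfolding holomorphic_on_open[OF open_ball] by blast
qed

lemma mult_gap_series_deriv: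
  assumes "summable a" "\<And>k. 0 \<le> a k" "norm z < 1"
  shows "z * gap_series_deriv a n z = (\<Sum>k. of_real (a k * real (n k)) * z ^ n k)"
proof -
  have "summable (\<lambda>k. of_real (a k * real (n k)) * z ^ (n k - 1))"
    by (rule summable_norm_cancel, rule summable_gap_series_deriv[OF assms])
  then have "z * gap_series_deriv a n z = (\<Sum>k. z * (of_real (a k * real (n k)) * z ^ (n k - 1)))"
    unfolding gap_series_deriv_def by (rule suminf_mult [symmetric])
  also have "\<dots> = (\<Sum>k. of_real (a k * real (n k)) * z ^ n k)"
  proof (rule suminf_cong)
    show "z * (of_real (a k * real (n k)) * z ^ (n k - 1)) = of_real (a k * real (n k)) * z ^ n k"
      for k by (cases "n k") simp_all
  qed
  finally show ?thesis .
qed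

definition pstar_coeff :: "nat \<Rightarrow> real" where
  "pstar_coeff k = (1 / 2) ^ Suc k"

definition pstar_exp :: "nat \<Rightarrow> nat" where
  "pstar_exp k = 2 ^ (4 * k^2)"

definition pstar :: "complex \<Rightarrow> complex" where
  "pstar z = exp (gap_series pstar_coeff pstar_exp z)"

definition pstar_radius :: "nat \<Rightarrow> real" where
  "pstar_radius K = 1 - 1 / (2 * real (pstar_exp K))"

lemma pstar_coeff_sums: "pstar_coeff sums 1"
  unfolding pstar_coeff_def by (rule power_half_series)

lemma summable_pstar_coeff: "summable pstar_coeff"
  using pstar_coeff_sums by (rule sums_summable)

lemma pstar_coeff_nonneg: "0 \<le> pstar_coeff k"
  by (simp add: pstar_coeff_def)

lemma pstar_in_carath_P: "pstar \<in> carath_P"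
proof -
  have "\<bar>Im (gap_series pstar_coeff pstar_exp z)\<bar> < pi / 2" if "z \<in> ball 0 1" for z
  proof -
    have "norm (gap_series pstar_coeff pstar_exp z) \<le> 1"
      using norm_gap_series_le[OF summable_pstar_coeff pstar_coeff_nonneg, of z pstar_exp] that
        sums_unique[OF pstar_coeff_sums] by simp
    then show ?thesis
      using abs_Im_le_cmod[of "gap_series pstar_coeff pstar_exp z"] pi_gt3 by linarith
  qed
  then show ?thesis
    unfolding pstar_def[abs_def]
    by (intro exp_in_carath_P holomorphic_gap_series summable_pstar_coeff pstar_coeff_nonneg)
qed

lemma deriv_pstar:
  assumes "norm z < 1"
  shows "deriv pstar z = pstar z * gap_series_deriv pstar_coeff pstar_exp z"
proof -
  have "(pstar has_field_derivative pstar z * gap_series_deriv pstar_coeff pstar_exp z) (at z)"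
    unfolding pstar_def[abs_def]
    using gap_series_has_field_derivative[OF summable_pstar_coeff pstar_coeff_nonneg assms]
    by (auto intro!: derivative_eq_intros)
  then show ?thesis
    by (rule DERIV_imp_deriv)
qed

lemma pstar_exp_mono: "k \<le> j \<Longrightarrow> pstar_exp k \<le> pstar_exp j"
  unfolding pstar_exp_def by (intro power_increasing) (auto intro: power_mono)

lemma pstar_exp_gap_below:
  assumes "k < K"
  shows "2 ^ (K + 3) * pstar_exp k \<le> pstar_exp K"
proof -
  obtain d where "K = Suc k + d"
    using assms less_iff_Suc_add by auto
  then have "4 * k^2 + (K + 3) \<le> 4 * K^2"
    by (simp add: power2_eq_square algebra_simps)
  then have "(2::nat) ^ (4 * k^2 + (K + 3)) \<le> 2 ^ (4 * K^2)"
    by (intro power_increasing) auto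
  then show ?thesis
    by (simp add: pstar_exp_def power_add mult_ac)
qed

lemma pstar_exp_gap_above:
  assumes "0 < K"
  shows "2 ^ (K + 6) * pstar_exp K \<le> pstar_exp (Suc K)"
proof -
  have "4 * K^2 + (K + 6) \<le> 4 * (Suc K)^2"
    using assms by (simp add: power2_eq_square)
  then have "(2::nat) ^ (4 * K^2 + (K + 6)) \<le> 2 ^ (4 * (Suc K)^2)"
    by (intro power_increasing) auto
  then show ?thesis
    by (simp add: pstar_exp_def power_add mult_ac)
qed

lemma pstar_radius_bounds: "1 / 2 \<le> pstar_radius K" "pstar_radius K < 1"
proof -
  have "1 \<le> real (pstar_exp K)"
    by (simp add: pstar_exp_def)
  then show "1 / 2 \<le> pstar_radius K" "pstar_radius K < 1"
    by (auto simp: pstar_radius_def field_simps)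
qed

lemma pstar_exp_term_le:
  assumes "0 < K" "k \<noteq> K"
  shows "real (pstar_exp k) * pstar_radius K ^ pstar_exp k \<le> real (pstar_exp K) / 2 ^ (K + 3)"
proof -
  define N where "N = real (pstar_exp K)"
  have N: "1 \<le> N"
    by (simp add: N_def pstar_exp_def)
  have r: "0 \<le> pstar_radius K" "pstar_radius K < 1"
    using pstar_radius_bounds[of K] by auto
  consider "k < K" | "Suc K \<le> k"
    using assms(2) by linarith
  then show ?thesis
  proof cases
    case 1
    have "real (pstar_exp k) * pstar_radius K ^ pstar_exp k \<le> real (pstar_exp k)"
      using r by (simp add: mult_left_le power_le_one)
    also have "\<dots> \<le> N / 2 ^ (K + 3)"
    proof -
      have "real (2 ^ (K + 3) * pstar_exp k) \<le> N"
        unfolding N_def using pstar_exp_gap_below[OF 1] by (rule of_nat_mono)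
      then show ?thesis
        by (simp add: field_simps)
    qed
    finally show ?thesis
      by (simp add: N_def)
  next
    case 2
    have "real (pstar_exp k) * pstar_radius K ^ pstar_exp k
            \<le> 2 / (real (pstar_exp k) * (1 - pstar_radius K)^2)"
      by (rule of_nat_mult_power_le[OF r])
    also have "\<dots> = 8 * N^2 / real (pstar_exp k)"
      by (simp add: pstar_radius_def N_def power2_eq_square field_simps)
    also have "\<dots> \<le> 8 * N^2 / real (pstar_exp (Suc K))"
      using pstar_exp_mono[OF 2] by (intro divide_left_mono) (auto simp: pstar_exp_def)
    also have "\<dots> \<le> 8 * N^2 / (2 ^ (K + 6) * N)"
    proof -
      have "real (2 ^ (K + 6) * pstar_exp K) \<le> real (pstar_exp (Suc K))"
        using pstar_exp_gap_above[OF assms(1)] by (rule of_nat_mono)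
      then show ?thesis
        using N by (intro divide_left_mono) (auto simp: N_def pstar_exp_def)
    qed
    also have "\<dots> = N / 2 ^ (K + 3)"
      using N by (simp add: power2_eq_square power_add field_simps)
    finally show ?thesis
      by (simp add: N_def)
  qed
qed

lemma pstar_log_deriv_lower_bound:
  assumes K: "0 < K" and w: "norm w = pstar_radius K"
  shows "pstar_coeff K * pstar_exp K / 4 \<le> norm (w * gap_series_deriv pstar_coeff pstar_exp w)"
proof -
  define B where "B = real (pstar_exp K) / 2 ^ (K + 3)"
  define f where "f k = of_real (pstar_coeff k * real (pstar_exp k)) * w ^ pstar_exp k" for k
  have norm_f: "norm (f k) = pstar_coeff k * (real (pstar_exp k) * pstar_radius K ^ pstar_exp k)" for k
    using pstar_coeff_nonneg[of k] w by (simp add: f_def norm_mult norm_power)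
  have coeff_K: "pstar_coeff K * pstar_exp K = 4 * B"
    by (simp add: B_def pstar_coeff_def power_add field_simps)
  have "2 * B \<le> norm (f K)"
  proof -
    have "1 / 2 \<le> pstar_radius K ^ pstar_exp K"
      using half_le_power_one_minus_inverse by (simp add: pstar_radius_def)
    then have "4 * B * (1 / 2) \<le> 4 * B * pstar_radius K ^ pstar_exp K"
      by (intro mult_left_mono) (auto simp: B_def)
    moreover have "norm (f K) = 4 * B * pstar_radius K ^ pstar_exp K"
      using norm_f[of K] coeff_K by (metis mult.assoc)
    ultimately show ?thesis
      by simp
  qed
  moreover have "norm (f K) - (\<Sum>k. pstar_coeff k * B) \<le> norm (suminf f)"
  proof (rule norm_suminf_ge_term)
    show "summable (\<lambda>k. pstar_coeff k * B)"
      by (intro summable_mult2 summable_pstar_coeff)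
    show "0 \<le> pstar_coeff K * B"
      using pstar_coeff_nonneg by (simp add: B_def)
    show "norm (f k) \<le> pstar_coeff k * B" if "k \<noteq> K" for k
      unfolding norm_f B_def
      using pstar_exp_term_le[OF K that] pstar_coeff_nonneg by (rule mult_left_mono)
  qed
  moreover have "(\<Sum>k. pstar_coeff k * B) = B"
    using sums_mult2[OF pstar_coeff_sums, of B] by (simp add: sums_iff)
  moreover have "suminf f = w * gap_series_deriv pstar_coeff pstar_exp w"
    unfolding f_def using w pstar_radius_bounds(2)[of K]
    by (intro mult_gap_series_deriv[symmetric] summable_pstar_coeff pstar_coeff_nonneg) simp
  ultimately show ?thesis
    by (simp add: coeff_K)
qed

lemma I_int_pstar_ge:
  assumes "0 < K"
  shows "2 * pi * (pstar_coeff K * pstar_exp K / 4)^2 \<le> I_int pstar (pstar_radius K)"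
proof (rule I_int_ge_of_circle_bound)
  show "pstar holomorphic_on ball 0 1"
    using pstar_in_carath_P by (simp add: carath_P_def)
  show "pstar z \<noteq> 0" for z
    by (simp add: pstar_def)
  show "0 \<le> pstar_radius K" "pstar_radius K < 1"
    using pstar_radius_bounds[of K] by auto
  fix w :: complex
  assume w: "norm w = pstar_radius K"
  then have "w * deriv pstar w / pstar w = w * gap_series_deriv pstar_coeff pstar_exp w"
    using pstar_radius_bounds[of K] by (simp add: deriv_pstar pstar_def)
  then show "(pstar_coeff K * pstar_exp K / 4)^2 \<le> (cmod (w * deriv pstar w / pstar w))^2"
    using pstar_log_deriv_lower_bound[OF assms w] pstar_coeff_nonneg[of K]
    by (intro power_mono) auto
qed

lemma pstar_radius_tendsto: "filterlim pstar_radius (at_left 1) sequentially"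
proof (rule tendsto_imp_filterlim_at_left)
  show "(pstar_radius \<longlongrightarrow> 1) sequentially"
    unfolding pstar_radius_def pstar_exp_def of_nat_power of_nat_numeral by real_asymp
  show "\<forall>\<^sub>F K in sequentially. pstar_radius K < 1"
    using pstar_radius_bounds(2) by simp
qed

lemma pstar_lower_bound_outgrows:
  assumes "\<beta> < 2"
  shows "filterlim (\<lambda>K. 2 * pi * (pstar_coeff K * pstar_exp K / 4)^2 * (1 - pstar_radius K) powr \<beta>)
           at_top sequentially"
  unfolding pstar_radius_def pstar_coeff_def pstar_exp_def of_nat_power of_nat_numeral
  using assms by real_asymp

theorem theorem1p2:
  shows "\<exists>p\<in>carath_P. \<forall>\<beta>::real. \<beta> < 2 \<longrightarrow>
           \<not> (\<exists>C::real. \<forall>\<^sub>F r in at_left 1. I_int p r \<le> C * (1 - r) powr (- \<beta>))"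
proof (intro bexI[OF _ pstar_in_carath_P] allI impI)
  fix \<beta> :: real
  assume "\<beta> < 2"
  have "\<forall>\<^sub>F K in sequentially.
          2 * pi * (pstar_coeff K * pstar_exp K / 4)^2 \<le> I_int pstar (pstar_radius K)"
    using eventually_gt_at_top[of 0] by eventually_elim (rule I_int_pstar_ge)
  then show "\<not> (\<exists>C. \<forall>\<^sub>F r in at_left 1. I_int pstar r \<le> C * (1 - r) powr (- \<beta>))"
    using pstar_radius_tendsto pstar_lower_bound_outgrows[OF \<open>\<beta> < 2\<close>]
    by (intro not_eventually_le_powr_at_left)
qed

end
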